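(* Fix $M<\infty$, $\kappa\in(0,1/2)$, assume unconfoundedness, and let $\mathcal{G}$ be a class of allocations and $\mathcal{G}_1,\mathcal{G}_2,\dots$ a (finite or countable) sequence with $\mathcal{G}_k\subseteq\mathcal{G}$ of finite VC dimension $V_k$. Given a propensity estimator $\hat e$, let $\mathcal{P}_e$ be a class of distributions with $\sup_{P\in\mathcal{P}_e}E_{P^n}\big[\frac1n\sum_{i=1}^n|\hat\tau_i-\tau_i|\big]=O(\phi_n^{-1})$ for some $\phi_n\to\infty$. Suppose the penalties $C^e_n(k)$ are such that there exist random quantities $\tilde C_n(k)$ ("infeasible penalties") satisfying: (i) there exist positive constants $c_0,c_1$ such that for all $n,k$ and $\epsilon>0$, $\sup_{P\in\mathcal{P}_e\cap\mathcal{P}(M,\kappa)}P^n\big(W_n(\hat G^e_{n,k})-W(\hat G^e_{n,k})-\tilde C_n(k)>\epsilon\big)\le c_1e^{-2c_0n\epsilon^2}$; (ii) there exists a positive constant $C_1$ such that for all $n,k$, $\sup_{P\in\mathcal{P}_e\cap\mathcal{P}(M,\kappa)}E_{P^n}[\tilde C_n(k)]\le C_1\sqrt{V_k/n}$; (iii) $\sup_{P\in\mathcal{P}_e\cap\mathcal{P}(M,\kappa)}E_{P^n}\big[\sup_k|C^e_n(k)-\tilde C_n(k)|\big]=O(\phi_n^{-1})$. Then there exist constants $\Delta,c_0>0$ such that for every $P\in\mathcal{P}_e\cap\mathcal{P}(M,\kappa)$, $$E_{P^n}\big[W^*_{\mathcal{G}}-W(\hat G^e_n)\big]\le\inf_k\Big[E_{P^n}[\tilde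 C_n(k)]+\big(W^*_{\mathcal{G}}-W^*_{\mathcal{G}_k}\big)+\sqrt{\tfrac kn}\Big]+O(\phi_n^{-1})+\sqrt{\frac{\log(\Delta e)}{2c_0n}}.$$
   Context: Potential outcomes $Y(0),Y(1)\in\mathbb{R}$, treatment $D\in\{0,1\}$, covariates $X\in\mathcal{X}\subseteq\mathbb{R}^{d_x}$; observed $Y=Y(1)D+Y(0)(1-D)$; $P$ is the distribution of $(Y,D,X)$, data $\{(Y_i,D_i,X_i)\}_{i=1}^n$ i.i.d. from $P$. Unconfoundedness: $(Y(1),Y(0))\perp D\mid X$. Propensity score $e(x)=E_P[D\mid X=x]$. $\mathcal{P}(M,\kappa)$: distributions with support of $Y$ in $[-M/2,M/2]$ and $e(x)\in[\kappa,1-\kappa]$ for all $x$. Welfare of $G\subseteq\mathcal{X}$: $W(G)=E_P[(\frac{YD}{e(X)}-\frac{Y(1-D)}{1-e(X)})\mathbf{1}\{X\in G\}]$; $W^*_{\mathcal{A}}=\sup_{G\in\mathcal{A}}W(G)$. $\tau_i=\frac{Y_iD_i}{e(X_i)}-\frac{Y_i(1-D_i)}{1-e(X_i)}$, $W_n(G)=\frac1n\sum_i\tau_i\mathbf{1}\{X_i\in G\}$ (infeasible, uses the true $e$). With an estimator $\hat e$ of $e$ and trimming $\epsilon_n=O(n^{-\alpha})$ for some $\alpha>0$: $\hat\tau_i=\big[\frac{Y_iD_i}{\hat e(X_i)}-\frac{Y_i(1-D_i)}{1-\hat e(X_i)}\big]\mathbf{1}\{\epsilon_n\le\hat e(X_i)\le1-\epsilon_n\}$,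 $W^e_n(G)=\frac1n\sum_i\hat\tau_i\mathbf{1}\{X_i\in G\}$, $\hat G^e_{n,k}\in\arg\max_{G\in\mathcal{G}_k}W^e_n(G)$. With penalties $C^e_n(k)$, $R^e_{n,k}(G)=W^e_n(G)-C^e_n(k)-\sqrt{k/n}$ and the (e-hybrid) PWM rule is $\hat G^e_n=\hat G^e_{n,\hat k}$ with $\hat k\in\arg\max_kR^e_{n,k}(\hat G^e_{n,k})$. Maximizers assumed to exist. *)

theory Defs
  imports "HOL-Probability.Probability" "HOL-Library.Landau_Symbols"
begin

text \<open>An observation is a triple (Y, D, X): outcome, treatment indicator (True = treated),
  covariates in a Euclidean space.\<close>
type_synonym 'x obs = "real \<times> bool \<times> 'x"

definition Yv :: "'x obs \<Rightarrow> real" where "Yv w = fst w"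
definition Dv :: "'x obs \<Rightarrow> real" where "Dv w = of_bool (fst (snd w))"
definition Xv :: "'x obs \<Rightarrow> 'x" where "Xv w = snd (snd w)"

definition obsM :: "('x::euclidean_space) obs measure" where
  "obsM = borel \<Otimes>\<^sub>M (count_space UNIV \<Otimes>\<^sub>M borel)"

definition SampleM :: "nat \<Rightarrow> (nat \<Rightarrow> ('x::euclidean_space) obs) measure" where
  "SampleM n = PiM {..<n} (\<lambda>_. obsM)"

definition Pn :: "('x::euclidean_space) obs measure \<Rightarrow> nat \<Rightarrow> (nat \<Rightarrow> 'x obs) measure" where
  "Pn P n = PiM {..<n} (\<lambda>_. P)"

text \<open>e is a version of the propensity score E_P[D | X = x].\<close>
definition is_propensity :: "('x::euclidean_space) obs measure \<Rightarrow> ('x \<Rightarrow> real) \<Rightarrow> bool" where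
  "is_propensity P e \<longleftrightarrow> e \<in> borel_measurable borel \<and>
     (\<forall>A\<in>sets borel. (\<integral>w. indicator A (Xv w) * Dv w \<partial>P) = (\<integral>w. indicator A (Xv w) * e (Xv w) \<partial>P))"

text \<open>The class P(M, kappa); ps selects for each distribution its propensity score.\<close>
definition PMk :: "(('x::euclidean_space) obs measure \<Rightarrow> 'x \<Rightarrow> real) \<Rightarrow> real \<Rightarrow> real \<Rightarrow> 'x obs measure set" where
  "PMk ps M \<kappa> = {P. prob_space P \<and> sets P = sets obsM \<and> is_propensity P (ps P) \<and>
      (AE w in P. \<bar>Yv w\<bar> \<le> M / 2) \<and> (\<forall>x. \<kappa> \<le> ps P x \<and> ps P x \<le> 1 - \<kappa>)}"

definition tau :: "('x \<Rightarrow> real) \<Rightarrow> 'x obs \<Rightarrow> real" where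
  "tau e w = Yv w * Dv w / e (Xv w) - Yv w * (1 - Dv w) / (1 - e (Xv w))"

definition Welfare :: "('x \<Rightarrow> real) \<Rightarrow> 'x obs measure \<Rightarrow> 'x set \<Rightarrow> real" where
  "Welfare e P G = (\<integral>w. tau e w * indicator G (Xv w) \<partial>P)"

definition Wstar :: "('x \<Rightarrow> real) \<Rightarrow> 'x obs measure \<Rightarrow> 'x set set \<Rightarrow> real" where
  "Wstar e P A = (SUP G\<in>A. Welfare e P G)"

definition Wn :: "('x \<Rightarrow> real) \<Rightarrow> nat \<Rightarrow> (nat \<Rightarrow> 'x obs) \<Rightarrow> 'x set \<Rightarrow> real" where
  "Wn e n s G = (1 / real n) * (\<Sum>i<n. tau e (s i) * indicator G (Xv (s i)))"

text \<open>Trimmed IPW score with estimated propensity score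
  (ehat n s is the estimate computed from the sample s of size n; eps n is the trimming).\<close>
definition tauhat :: "(nat \<Rightarrow> (nat \<Rightarrow> 'x obs) \<Rightarrow> 'x \<Rightarrow> real) \<Rightarrow> (nat \<Rightarrow> real)
    \<Rightarrow> nat \<Rightarrow> (nat \<Rightarrow> 'x obs) \<Rightarrow> nat \<Rightarrow> real" where
  "tauhat ehat eps n s i =
     (let w = s i; eh = ehat n s (Xv w) in
       (Yv w * Dv w / eh - Yv w * (1 - Dv w) / (1 - eh))
       * indicator {eps n .. 1 - eps n} eh)"

definition Wen :: "(nat \<Rightarrow> (nat \<Rightarrow> 'x obs) \<Rightarrow> 'x \<Rightarrow> real) \<Rightarrow> (nat \<Rightarrow> real)
    \<Rightarrow> nat \<Rightarrow> (nat \<Rightarrow> 'x obs) \<Rightarrow> 'x set \<Rightarrow> real" where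
  "Wen ehat eps n s G = (1 / real n) * (\<Sum>i<n. tauhat ehat eps n s i * indicator G (Xv (s i)))"

definition Ren :: "(nat \<Rightarrow> (nat \<Rightarrow> 'x obs) \<Rightarrow> 'x \<Rightarrow> real) \<Rightarrow> (nat \<Rightarrow> real)
    \<Rightarrow> (nat \<Rightarrow> nat \<Rightarrow> (nat \<Rightarrow> 'x obs) \<Rightarrow> real)
    \<Rightarrow> nat \<Rightarrow> nat \<Rightarrow> (nat \<Rightarrow> 'x obs) \<Rightarrow> 'x set \<Rightarrow> real" where
  "Ren ehat eps Cpen n k s G = Wen ehat eps n s G - Cpen n k s - sqrt (real k / real n)"

definition shatters :: "'a set set \<Rightarrow> 'a set \<Rightarrow> bool" where
  "shatters C A \<longleftrightarrow> (\<forall>B\<subseteq>A. \<exists>G\<in>C. G \<inter> A = B)"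

definition finite_VC :: "'a set set \<Rightarrow> bool" where
  "finite_VC C \<longleftrightarrow> (\<exists>V::nat. \<forall>A. finite A \<and> shatters C A \<longrightarrow> card A \<le> V)"

definition VC_dim :: "'a set set \<Rightarrow> nat" where
  "VC_dim C = (GREATEST d. \<exists>A. finite A \<and> card A = d \<and> shatters C A)"

end

theory Submission
  imports Defs
begin

text \<open>On every sample the penalized rule obeys an oracle inequality: its welfare is at least
  the infeasible empirical welfare of any competitor in \<open>\<G>\<^sub>k\<close>, minus the infeasible penalty
  of \<open>k\<close> and \<open>sqrt (k / n)\<close>, twice the mean absolute error of the estimated scores, twice the
  largest gap between feasible and infeasible penalties, and the excess
  \<open>W\<^sub>n(G') - W(G') - C\<^sub>n(k') - sqrt (k' / n)\<close> (infeasible penalty \<open>C\<^sub>n\<close>) of the selected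
  pair \<open>(k', G')\<close>. In expectation the empirical welfare becomes \<open>W(G)\<close>, the two error terms
  are \<open>O(1 / \<phi>\<^sub>n)\<close> by assumption, and the excess is dominated by the sum over all \<open>k\<close> of the
  positive parts: condition (i), with its threshold shifted by \<open>sqrt (k / n)\<close>, makes their
  expectations a geometric series in \<open>k\<close> of total size \<open>O(1 / sqrt n)\<close>. For the finitely
  many \<open>n\<close> where the rates do not yet apply, all welfares are bounded by \<open>M / \<kappa>\<close>, and
  condition (i) also bounds the expected infeasible penalty from below.\<close>

lemma ennreal_pos_part_le_suminf_steps:
  fixes x d :: real
  assumes d: "0 < d"
  shows "ennreal (max x 0) \<le> (\<Sum>j. ennreal d * indicator {y. real j * d < y} x)"
proof (cases "0 < x")
  case False
  then show ?thesis by (simp add: max_def)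
next
  case True
  define m where "m = nat \<lceil>x / d\<rceil>"
  have below: "real j * d < x" if "j < m" for j
  proof -
    from that have "real j < x / d" unfolding m_def by linarith
    then show ?thesis using d by (simp add: pos_less_divide_eq)
  qed
  have "x \<le> real m * d"
    using d True unfolding m_def by (simp add: pos_divide_le_eq[symmetric])
  then have "ennreal (max x 0) \<le> (\<Sum>j<m. ennreal d)"
    using True d by (simp add: ennreal_of_nat_eq_real_of_nat ennreal_mult[symmetric] mult.commute)
  also have "\<dots> = (\<Sum>j<m. ennreal d * indicator {y. real j * d < y} x)"
    using below by (intro sum.cong) auto
  also have "\<dots> \<le> (\<Sum>j. ennreal d * indicator {y. real j * d < y} x)"
    by (rule sum_le_suminf[OF summableI]) auto
  finally show ?thesis .
qed

lemma exp_neg_square_add_le: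
  fixes \<beta> t u :: real
  assumes "0 \<le> \<beta>" "0 \<le> t" "0 \<le> u"
  shows "exp (- \<beta> * (t + u)\<^sup>2) \<le> exp (- \<beta> * u\<^sup>2) * exp (- \<beta> * t\<^sup>2)"
proof -
  have "\<beta> * (t\<^sup>2 + u\<^sup>2) \<le> \<beta> * (t + u)\<^sup>2"
    using assms by (intro mult_left_mono) (auto simp: power2_sum)
  then show ?thesis by (simp add: exp_add[symmetric] algebra_simps)
qed

text \<open>Layer-cake bound: integrating the tail over the grid of mesh \<open>1 / sqrt \<beta>\<close>
  turns the Gaussian tail into a geometric series.\<close>
lemma nn_integral_pos_part_le_gaussian_tail:
  fixes X :: "'a \<Rightarrow> real"
  assumes Q: "finite_measure Q" and X: "X \<in> borel_measurable Q" and a: "0 \<le> a" and \<beta>: "0 < \<beta>"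
    and tail: "\<And>t. 0 \<le> t \<Longrightarrow> measure Q {s \<in> space Q. t < X s} \<le> a * exp (- \<beta> * t\<^sup>2)"
  shows "(\<integral>\<^sup>+s. ennreal (max (X s) 0) \<partial>Q) \<le> ennreal (a / ((1 - exp (- 1)) * sqrt \<beta>))"
proof -
  interpret finite_measure Q by fact
  define d where "d = 1 / sqrt \<beta>"
  have d: "0 < d" using \<beta> by (simp add: d_def)
  have "(\<integral>\<^sup>+s. ennreal (max (X s) 0) \<partial>Q)
      \<le> (\<integral>\<^sup>+s. (\<Sum>j. ennreal d * indicator {s \<in> space Q. real j * d < X s} s) \<partial>Q)"
    by (intro nn_integral_mono) (use ennreal_pos_part_le_suminf_steps[OF d] in \<open>auto simp: indicator_def\<close>)
  also have "\<dots> = (\<Sum>j. ennreal (d * measure Q {s \<in> space Q. real j * d < X s}))"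
    using X d by (subst nn_integral_suminf, measurable)
      (simp add: nn_integral_cmult_indicator emeasure_eq_measure ennreal_mult)
  also have "\<dots> \<le> (\<Sum>j. ennreal (d * a * exp (- 1) ^ j))"
  proof (intro suminf_le summableI ennreal_leI)
    fix j :: nat
    have "exp (- \<beta> * (real j * d)\<^sup>2) = exp (- ((real j)\<^sup>2))"
      using \<beta> by (simp add: d_def power_mult_distrib power_divide)
    also have "\<dots> \<le> exp (- real j)"
    proof -
      have "real j \<le> (real j)\<^sup>2" by (cases j) (auto simp: power2_eq_square)
      then show ?thesis by simp
    qed
    finally have "exp (- \<beta> * (real j * d)\<^sup>2) \<le> exp (- 1) ^ j"
      by (simp add: exp_of_nat_mult[symmetric])
    then have "measure Q {s \<in> space Q. real j * d < X s} \<le> a * exp (- 1) ^ j"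
      using tail[of "real j * d"] d a by (meson mult_left_mono order_trans mult_nonneg_nonneg of_nat_0_le_iff less_imp_le)
    then show "d * measure Q {s \<in> space Q. real j * d < X s} \<le> d * a * exp (- 1) ^ j"
      using d by (simp add: mult.assoc)
  qed
  also have "\<dots> = ennreal (d * a * (1 / (1 - exp (- 1))))"
  proof (rule suminf_ennreal_eq)
    have "(\<lambda>j. exp (- 1) ^ j) sums (1 / (1 - exp (- 1 :: real)))"
      by (rule geometric_sums) simp
    then show "(\<lambda>j. d * a * exp (- 1) ^ j) sums (d * a * (1 / (1 - exp (- 1))))"
      by (rule sums_mult)
  qed (use d a in auto)
  also have "d * a * (1 / (1 - exp (- 1))) = a / ((1 - exp (- 1)) * sqrt \<beta>)"
    by (simp add: d_def)
  finally show ?thesis .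
qed

lemma integral_le_integral_add_nn_integral:
  fixes f g :: "'a \<Rightarrow> real" and R :: "'a \<Rightarrow> ennreal"
  assumes f: "integrable M f" and g: "integrable M g" and R: "R \<in> borel_measurable M"
    and c: "0 \<le> c" and R_int: "(\<integral>\<^sup>+x. R x \<partial>M) \<le> ennreal c"
    and le: "\<And>x. x \<in> space M \<Longrightarrow> R x < \<top> \<Longrightarrow> f x \<le> g x + enn2real (R x)"
  shows "(\<integral>x. f x \<partial>M) \<le> (\<integral>x. g x \<partial>M) + c"
proof -
  have "integral\<^sup>N M R \<noteq> \<infinity>"
    using le_less_trans[OF R_int ennreal_less_top] by (simp add: less_top)
  from nn_integral_PInf_AE[OF R this] have R_fin: "AE x in M. R x \<noteq> \<top>" by simp
  have nn: "(\<integral>\<^sup>+x. ennreal (enn2real (R x)) \<partial>M) = (\<integral>\<^sup>+x. R x \<partial>M)"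
    by (rule nn_integral_cong_AE) (use R_fin in \<open>auto simp: less_top\<close>)
  have Ri: "integrable M (\<lambda>x. enn2real (R x))"
    using R R_int nn by (intro integrableI_nonneg) (auto simp: less_top[symmetric] top_unique)
  have "(\<integral>x. enn2real (R x) \<partial>M) = enn2real (\<integral>\<^sup>+x. R x \<partial>M)"
    using R nn by (subst integral_eq_nn_integral) auto
  also have "\<dots> \<le> c"
    by (rule enn2real_leI[OF c R_int])
  finally have "(\<integral>x. enn2real (R x) \<partial>M) \<le> c" .
  moreover have "AE x in M. f x \<le> g x + enn2real (R x)"
    by (rule AE_mp[OF R_fin]) (auto intro!: AE_I2 le simp: less_top)
  then have "(\<integral>x. f x \<partial>M) \<le> (\<integral>x. g x + enn2real (R x) \<partial>M)"
    by (intro integral_mono_AE f Bochner_Integration.integrable_add g Ri)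
  ultimately show ?thesis using g Ri by simp
qed

lemma measurable_compose_countable_on:
  assumes f: "\<And>i. i \<in> I \<Longrightarrow> f i \<in> measurable M N" and I: "countable I"
    and g: "g \<in> measurable M (count_space UNIV)" and gI: "\<And>x. x \<in> space M \<Longrightarrow> g x \<in> I"
  shows "(\<lambda>x. f (g x) x) \<in> measurable M N"
proof (rule measurable_compose_countable'[OF f _ I])
  show "g \<in> measurable M (count_space I)"
    using g gI by (auto simp: measurable_def)
qed

lemma welfare_of_penalized_selection_ge:
  fixes We Wn W :: "'a \<Rightarrow> real" and C Ct r :: "'i \<Rightarrow> real"
  assumes "We G \<le> We (Gh k)"
    and "We (Gh k) - C k - r k \<le> We (Gh kh) - C kh - r kh"
    and "\<bar>We G - Wn G\<bar> \<le> D" "\<bar>We (Gh kh) - Wn (Gh kh)\<bar> \<le> D"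
    and "\<bar>C k - Ct k\<bar> \<le> S" "\<bar>C kh - Ct kh\<bar> \<le> S"
    and "Wn (Gh kh) - W (Gh kh) - Ct kh - r kh \<le> T"
  shows "Wn G - Ct k - r k - 2 * D - 2 * S - T \<le> W (Gh kh)"
  using assms by (smt (verit))

lemma obs_measurable [measurable]:
  "Yv \<in> borel_measurable obsM" "Dv \<in> borel_measurable obsM" "Xv \<in> measurable obsM borel"
  unfolding Yv_def[abs_def] Dv_def[abs_def] Xv_def[abs_def] obsM_def by measurable

lemma tau_measurable [measurable]:
  assumes [measurable]: "e \<in> borel_measurable borel"
  shows "tau e \<in> borel_measurable obsM"
  unfolding tau_def[abs_def] by measurable

lemma abs_tau_le:
  assumes "\<kappa> \<le> e (Xv w)" "e (Xv w) \<le> 1 - \<kappa>" "0 < \<kappa>" "\<bar>Yv w\<bar> \<le> M / 2"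
  shows "\<bar>tau e w\<bar> \<le> \<bar>M\<bar> / \<kappa>"
proof -
  have Y: "\<bar>Yv w\<bar> \<le> \<bar>M\<bar>" using assms(4) by linarith
  have "\<bar>Yv w / e (Xv w)\<bar> \<le> \<bar>M\<bar> / \<kappa>" "\<bar>Yv w / (1 - e (Xv w))\<bar> \<le> \<bar>M\<bar> / \<kappa>"
    using assms Y by (simp_all add: abs_divide frac_le)
  then show ?thesis by (cases "fst (snd w)") (simp_all add: tau_def Dv_def)
qed

lemma PMk_D:
  assumes P: "P \<in> PMk ps M \<kappa>" and \<kappa>: "0 < \<kappa>"
  shows "prob_space P" "sets P = sets obsM" "ps P \<in> borel_measurable borel"
    "tau (ps P) \<in> borel_measurable P" "AE w in P. \<bar>tau (ps P) w\<bar> \<le> \<bar>M\<bar> / \<kappa>"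
proof -
  show "prob_space P" and sets: "sets P = sets obsM" and e: "ps P \<in> borel_measurable borel"
    using P by (auto simp: PMk_def is_propensity_def)
  show "tau (ps P) \<in> borel_measurable P"
    using tau_measurable[OF e] measurable_cong_sets[OF sets refl] by blast
  have Y: "AE w in P. \<bar>Yv w\<bar> \<le> M / 2" and e: "\<forall>x. \<kappa> \<le> ps P x \<and> ps P x \<le> 1 - \<kappa>"
    using P by (auto simp: PMk_def)
  show "AE w in P. \<bar>tau (ps P) w\<bar> \<le> \<bar>M\<bar> / \<kappa>"
    by (rule AE_mp[OF Y], rule AE_I2) (use e \<kappa> abs_tau_le in blast)
qed

lemma integrable_tau_indicator:
  assumes P: "P \<in> PMk ps M \<kappa>" and \<kappa>: "0 < \<kappa>" and G: "G \<in> sets borel"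
  shows "integrable P (\<lambda>w. tau (ps P) w * indicator G (Xv w))"
    and "(\<integral>w. \<bar>tau (ps P) w * indicator G (Xv w)\<bar> \<partial>P) \<le> \<bar>M\<bar> / \<kappa>"
proof -
  note P = PMk_D[OF P \<kappa>]
  interpret prob_space P by fact
  have "Xv \<in> measurable P borel"
    using measurable_cong_sets[OF P(2) refl] obs_measurable by blast
  then have meas: "(\<lambda>w. tau (ps P) w * indicator G (Xv w)) \<in> borel_measurable P"
    using P(4) G by measurable
  have le_abs_tau: "\<bar>tau (ps P) w * indicator G (Xv w)\<bar> \<le> \<bar>tau (ps P) w\<bar>" for w
    by (simp add: indicator_def)
  have bound: "AE w in P. \<bar>tau (ps P) w * indicator G (Xv w)\<bar> \<le> \<bar>M\<bar> / \<kappa>"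
    by (rule AE_mp[OF P(5)], rule AE_I2) (use le_abs_tau order_trans in blast)
  show int: "integrable P (\<lambda>w. tau (ps P) w * indicator G (Xv w))"
    using bound meas by (intro integrable_const_bound[where B="\<bar>M\<bar> / \<kappa>"]) simp_all
  have "(\<integral>w. \<bar>tau (ps P) w * indicator G (Xv w)\<bar> \<partial>P) \<le> (\<integral>w. \<bar>M\<bar> / \<kappa> \<partial>P)"
    using int bound by (intro integral_mono_AE) auto
  then show "(\<integral>w. \<bar>tau (ps P) w * indicator G (Xv w)\<bar> \<partial>P) \<le> \<bar>M\<bar> / \<kappa>"
    by (simp add: prob_space)
qed

lemma abs_Welfare_le:
  assumes "P \<in> PMk ps M \<kappa>" "0 < \<kappa>" "G \<in> sets borel"
  shows "\<bar>Welfare (ps P) P G\<bar> \<le> \<bar>M\<bar> / \<kappa>"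
proof -
  have "\<bar>Welfare (ps P) P G\<bar> \<le> (\<integral>w. \<bar>tau (ps P) w * indicator G (Xv w)\<bar> \<partial>P)"
    unfolding Welfare_def by (rule integral_abs_bound)
  then show ?thesis using integrable_tau_indicator(2)[OF assms] by linarith
qed

lemma Wstar_le:
  assumes "P \<in> PMk ps M \<kappa>" "0 < \<kappa>" "A \<subseteq> sets borel" "A \<noteq> {}"
  shows "Wstar (ps P) P A \<le> \<bar>M\<bar> / \<kappa>"
  unfolding Wstar_def
proof (rule cSUP_least)
  fix G assume "G \<in> A"
  then show "Welfare (ps P) P G \<le> \<bar>M\<bar> / \<kappa>"
    using abs_Welfare_le[OF assms(1,2)] assms(3) by fastforce
qed fact

lemma prob_space_Pn: "prob_space P \<Longrightarrow> prob_space (Pn P n)"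
  unfolding Pn_def by (rule prob_space_PiM) auto

lemma sets_Pn: "sets P = sets obsM \<Longrightarrow> sets (Pn P n) = sets (SampleM n)"
  unfolding Pn_def SampleM_def by (rule sets_PiM_cong) auto

lemma sample_component_measurable [measurable]:
  "i < n \<Longrightarrow> (\<lambda>s. s i) \<in> measurable (SampleM n) obsM"
  unfolding SampleM_def by (rule measurable_component_singleton) auto

lemma integral_sample_mean:
  fixes g :: "('x::euclidean_space) obs \<Rightarrow> real"
  assumes P: "prob_space P" and g: "integrable P g" and n: "1 \<le> n"
  shows "integrable (Pn P n) (\<lambda>s. 1 / real n * (\<Sum>i<n. g (s i)))"
    and "(\<integral>s. 1 / real n * (\<Sum>i<n. g (s i)) \<partial>Pn P n) = (\<integral>w. g w \<partial>P)"
proof -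
  have comp: "(\<lambda>s. s i) \<in> measurable (Pn P n) P" if "i < n" for i
    unfolding Pn_def using that by (intro measurable_component_singleton) auto
  have distr: "distr (Pn P n) P (\<lambda>s. s i) = P" if "i < n" for i
    unfolding Pn_def using that P by (intro distr_PiM_component) auto
  have int: "integrable (Pn P n) (\<lambda>s. g (s i))" if "i < n" for i
    using integrable_distr_eq[OF comp[OF that], of g] distr[OF that] g by simp
  have eq: "(\<integral>s. g (s i) \<partial>Pn P n) = (\<integral>w. g w \<partial>P)" if "i < n" for i
    using integral_distr[OF comp[OF that], of g] distr[OF that] g by simp
  show "integrable (Pn P n) (\<lambda>s. 1 / real n * (\<Sum>i<n. g (s i)))"
    using int by (intro integrable_mult_right integrable_sum) auto
  show "(\<integral>s. 1 / real n * (\<Sum>i<n. g (s i)) \<partial>Pn P n) = (\<integral>w. g w \<partial>P)"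
    using int eq n by (simp add: integral_sum)
qed

lemma measurable_Welfare_family:
  assumes P: "prob_space P" "sets P = sets obsM" and e [measurable]: "e \<in> borel_measurable borel"
    and G: "(\<lambda>(s, x). indicator (Gh s) x :: real) \<in> borel_measurable (N \<Otimes>\<^sub>M borel)"
  shows "(\<lambda>s. Welfare e P (Gh s)) \<in> borel_measurable N"
proof -
  interpret prob_space P by fact
  have [measurable]: "Xv \<in> measurable P borel" "tau e \<in> borel_measurable P"
    using measurable_cong_sets[OF P(2) refl] obs_measurable tau_measurable[OF e] by blast+
  have "(\<lambda>z. (fst z, Xv (snd z))) \<in> measurable (N \<Otimes>\<^sub>M P) (N \<Otimes>\<^sub>M borel)"
    by measurable
  from measurable_compose[OF this G]
  have [measurable]: "(\<lambda>z. indicator (Gh (fst z)) (Xv (snd z)) :: real) \<in> borel_measurable (N \<Otimes>\<^sub>M P)"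
    by simp
  have "(\<lambda>z. tau e (snd z) * indicator (Gh (fst z)) (Xv (snd z))) \<in> borel_measurable (N \<Otimes>\<^sub>M P)"
    by measurable
  then have "(\<lambda>(s, w). tau e w * indicator (Gh s) (Xv w)) \<in> borel_measurable (N \<Otimes>\<^sub>M P)"
    by (simp add: split_beta')
  then have "(\<lambda>s. \<integral>w. tau e w * indicator (Gh s) (Xv w) \<partial>P) \<in> borel_measurable N"
    by (rule borel_measurable_lebesgue_integral)
  then show ?thesis unfolding Welfare_def .
qed

lemma measurable_sample_indicator:
  assumes G: "(\<lambda>(s, x). indicator (Gh s) x :: real) \<in> borel_measurable (SampleM n \<Otimes>\<^sub>M borel)"
    and i: "i < n"
  shows "(\<lambda>s. indicator (Gh s) (Xv (s i)) :: real) \<in> borel_measurable (SampleM n)"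
proof -
  have "(\<lambda>s. (s, Xv (s i))) \<in> measurable (SampleM n) (SampleM n \<Otimes>\<^sub>M borel)"
    using i by measurable
  from measurable_compose[OF this G] show ?thesis by simp
qed

lemma measurable_Wn_family:
  assumes [measurable]: "e \<in> borel_measurable borel"
    and G: "(\<lambda>(s, x). indicator (Gh s) x :: real) \<in> borel_measurable (SampleM n \<Otimes>\<^sub>M borel)"
  shows "(\<lambda>s. Wn e n s (Gh s)) \<in> borel_measurable (SampleM n)"
  unfolding Wn_def using measurable_sample_indicator[OF G] by measurable

lemma measurable_tauhat_error:
  assumes [measurable]: "e \<in> borel_measurable borel"
    and eh: "(\<lambda>(s, x). ehat n s x) \<in> borel_measurable (SampleM n \<Otimes>\<^sub>M borel)"
  shows "(\<lambda>s. 1 / real n * (\<Sum>i<n. \<bar>tauhat ehat eps n s i - tau e (s i)\<bar>)) \<in> borel_measurable (SampleM n)"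
proof -
  have [measurable]: "(\<lambda>s. ehat n s (Xv (s i))) \<in> borel_measurable (SampleM n)" if "i < n" for i
  proof -
    have "(\<lambda>s. (s, Xv (s i))) \<in> measurable (SampleM n) (SampleM n \<Otimes>\<^sub>M borel)"
      using that by measurable
    from measurable_compose[OF this eh] show ?thesis by simp
  qed
  show ?thesis unfolding tauhat_def Let_def by measurable
qed

lemma abs_Wn_le: "\<bar>Wn e n s G\<bar> \<le> 1 / real n * (\<Sum>i<n. \<bar>tau e (s i)\<bar>)"
proof -
  have "\<bar>\<Sum>i<n. tau e (s i) * indicator G (Xv (s i))\<bar> \<le> (\<Sum>i<n. \<bar>tau e (s i)\<bar>)"
    by (rule order_trans[OF sum_abs]) (auto intro!: sum_mono simp: indicator_def)
  then show ?thesis unfolding Wn_def by (simp add: abs_mult divide_right_mono)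
qed

lemma abs_Wen_minus_Wn_le:
  "\<bar>Wen ehat eps n s G - Wn e n s G\<bar> \<le> 1 / real n * (\<Sum>i<n. \<bar>tauhat ehat eps n s i - tau e (s i)\<bar>)"
proof -
  have "Wen ehat eps n s G - Wn e n s G
      = 1 / real n * (\<Sum>i<n. (tauhat ehat eps n s i - tau e (s i)) * indicator G (Xv (s i)))"
    unfolding Wen_def Wn_def by (simp add: sum_subtractf left_diff_distrib right_diff_distrib)
  moreover have "\<bar>\<Sum>i<n. (tauhat ehat eps n s i - tau e (s i)) * indicator G (Xv (s i))\<bar>
      \<le> (\<Sum>i<n. \<bar>tauhat ehat eps n s i - tau e (s i)\<bar>)"
    by (rule order_trans[OF sum_abs]) (auto intro!: sum_mono simp: indicator_def)
  ultimately show ?thesis by (simp add: abs_mult divide_right_mono)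
qed

definition excess_constant :: "real \<Rightarrow> real \<Rightarrow> real" where
  "excess_constant c0 c1 = c1 / ((1 - exp (- 1)) * (1 - exp (- 2 * c0)) * sqrt (2 * c0))"

text \<open>The hypotheses of the theorem for one distribution \<open>P\<close> and one sample size \<open>n\<close>:
  \<open>Ctil\<close> is the infeasible penalty \<open>C\<^sub>n(\<cdot>)\<close> of \<open>P\<close> and \<open>c0\<close>, \<open>c1\<close> are the constants of
  condition (i).\<close>
locale pwm_sample =
  fixes ps :: "('x::euclidean_space) obs measure \<Rightarrow> 'x \<Rightarrow> real"
    and M \<kappa> :: real
    and \<G> :: "'x set set"
    and K :: "nat set"
    and Gs :: "nat \<Rightarrow> 'x set set"
    and ehat :: "nat \<Rightarrow> (nat \<Rightarrow> 'x obs) \<Rightarrow> 'x \<Rightarrow> real"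
    and eps :: "nat \<Rightarrow> real"
    and Cpen :: "nat \<Rightarrow> nat \<Rightarrow> (nat \<Rightarrow> 'x obs) \<Rightarrow> real"
    and Ghat :: "nat \<Rightarrow> nat \<Rightarrow> (nat \<Rightarrow> 'x obs) \<Rightarrow> 'x set"
    and khat :: "nat \<Rightarrow> (nat \<Rightarrow> 'x obs) \<Rightarrow> nat"
    and P :: "'x obs measure"
    and n :: nat
    and Ctil :: "nat \<Rightarrow> (nat \<Rightarrow> 'x obs) \<Rightarrow> real"
    and c0 c1 :: real
  assumes kappa_pos: "0 < \<kappa>"
    and P_in_PMk: "P \<in> PMk ps M \<kappa>"
    and n_pos: "1 \<le> n"
    and G_meas: "\<G> \<subseteq> sets borel"
    and K_pos: "\<And>k. k \<in> K \<Longrightarrow> 1 \<le> k"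
    and Gs_sub: "\<And>k. k \<in> K \<Longrightarrow> Gs k \<subseteq> \<G>"
    and ehat_meas: "(\<lambda>(s, x). ehat n s x) \<in> borel_measurable (SampleM n \<Otimes>\<^sub>M borel)"
    and Ghat_meas: "\<And>k. k \<in> K \<Longrightarrow>
         (\<lambda>(s, x). indicator (Ghat n k s) x :: real) \<in> borel_measurable (SampleM n \<Otimes>\<^sub>M borel)"
    and Ghat_max: "\<And>k s. k \<in> K \<Longrightarrow> s \<in> space (SampleM n) \<Longrightarrow>
         Ghat n k s \<in> Gs k \<and> (\<forall>G\<in>Gs k. Wen ehat eps n s G \<le> Wen ehat eps n s (Ghat n k s))"
    and khat_meas: "khat n \<in> measurable (SampleM n) (count_space UNIV)"
    and khat_max: "\<And>s. s \<in> space (SampleM n) \<Longrightarrow> khat n s \<in> K \<and>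
         (\<forall>k\<in>K. Ren ehat eps Cpen n k s (Ghat n k s)
                 \<le> Ren ehat eps Cpen n (khat n s) s (Ghat n (khat n s) s))"
    and Cpen_meas: "\<And>k. k \<in> K \<Longrightarrow> Cpen n k \<in> borel_measurable (SampleM n)"
    and Ctil_meas: "\<And>k. k \<in> K \<Longrightarrow>
         Ctil k \<in> borel_measurable (SampleM n) \<and> integrable (Pn P n) (Ctil k)"
    and c0_pos: "0 < c0"
    and c1_nonneg: "0 \<le> c1"
    and excess_tail: "\<And>k \<epsilon>. k \<in> K \<Longrightarrow> 0 < \<epsilon> \<Longrightarrow>
         measure (Pn P n) {s \<in> space (Pn P n).
            Wn (ps P) n s (Ghat n k s) - Welfare (ps P) P (Ghat n k s) - Ctil k s > \<epsilon>}
           \<le> c1 * exp (- 2 * c0 * real n * \<epsilon>\<^sup>2)"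
begin

lemma P_facts: "prob_space P" "sets P = sets obsM" "ps P \<in> borel_measurable borel"
  using PMk_D[OF P_in_PMk kappa_pos] by auto

sublocale sample: prob_space "Pn P n"
  using P_facts(1) by (rule prob_space_Pn)

lemma sets_sample: "sets (Pn P n) = sets (SampleM n)"
  using P_facts(2) by (rule sets_Pn)

lemma space_sample: "space (Pn P n) = space (SampleM n)"
  using sets_sample by (rule sets_eq_imp_space_eq)

lemma measurable_sample: "f \<in> measurable (SampleM n) N \<Longrightarrow> f \<in> measurable (Pn P n) N"
  using measurable_cong_sets[OF sets_sample refl] by blast

lemma Ghat_in_sets_borel: "k \<in> K \<Longrightarrow> s \<in> space (Pn P n) \<Longrightarrow> Ghat n k s \<in> sets borel"
  using Ghat_max Gs_sub G_meas space_sample by blast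

lemma khat_in_K: "s \<in> space (Pn P n) \<Longrightarrow> khat n s \<in> K"
  using khat_max space_sample by blast

lemma Gs_nonempty: "k \<in> K \<Longrightarrow> Gs k \<noteq> {}"
  using Ghat_max sample.not_empty space_sample by blast

lemma abs_Welfare_Ghat_le:
  "k \<in> K \<Longrightarrow> s \<in> space (Pn P n) \<Longrightarrow> \<bar>Welfare (ps P) P (Ghat n k s)\<bar> \<le> \<bar>M\<bar> / \<kappa>"
  using abs_Welfare_le[OF P_in_PMk kappa_pos Ghat_in_sets_borel] .

lemma measurable_Welfare_Ghat:
  "k \<in> K \<Longrightarrow> (\<lambda>s. Welfare (ps P) P (Ghat n k s)) \<in> borel_measurable (Pn P n)"
  using measurable_Welfare_family[OF P_facts Ghat_meas] by (rule measurable_sample)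

lemma measurable_Wn_Ghat:
  "k \<in> K \<Longrightarrow> (\<lambda>s. Wn (ps P) n s (Ghat n k s)) \<in> borel_measurable (Pn P n)"
  using measurable_Wn_family[OF P_facts(3) Ghat_meas] by (rule measurable_sample)

lemma integrable_Welfare_Ghat:
  assumes k: "k \<in> K"
  shows "integrable (Pn P n) (\<lambda>s. Welfare (ps P) P (Ghat n k s))"
    and "(\<integral>s. Welfare (ps P) P (Ghat n k s) \<partial>Pn P n) \<le> \<bar>M\<bar> / \<kappa>"
proof -
  show int: "integrable (Pn P n) (\<lambda>s. Welfare (ps P) P (Ghat n k s))"
    using abs_Welfare_Ghat_le[OF k] measurable_Welfare_Ghat[OF k]
    by (intro sample.integrable_const_bound[where B="\<bar>M\<bar> / \<kappa>"]) auto
  have "(\<integral>s. Welfare (ps P) P (Ghat n k s) \<partial>Pn P n) \<le> (\<integral>s. \<bar>M\<bar> / \<kappa> \<partial>Pn P n)"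
    using int abs_Welfare_Ghat_le[OF k] by (intro integral_mono) (auto simp: abs_le_iff)
  then show "(\<integral>s. Welfare (ps P) P (Ghat n k s) \<partial>Pn P n) \<le> \<bar>M\<bar> / \<kappa>"
    by (simp add: sample.prob_space)
qed

lemma mean_abs_tau:
  shows "integrable (Pn P n) (\<lambda>s. 1 / real n * (\<Sum>i<n. \<bar>tau (ps P) (s i)\<bar>))"
    and "(\<integral>s. 1 / real n * (\<Sum>i<n. \<bar>tau (ps P) (s i)\<bar>) \<partial>Pn P n) \<le> \<bar>M\<bar> / \<kappa>"
proof -
  note tau = integrable_tau_indicator[OF P_in_PMk kappa_pos, of UNIV, simplified]
  show "integrable (Pn P n) (\<lambda>s. 1 / real n * (\<Sum>i<n. \<bar>tau (ps P) (s i)\<bar>))"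
    using integral_sample_mean(1)[OF P_facts(1) _ n_pos] tau(1) by blast
  show "(\<integral>s. 1 / real n * (\<Sum>i<n. \<bar>tau (ps P) (s i)\<bar>) \<partial>Pn P n) \<le> \<bar>M\<bar> / \<kappa>"
    using integral_sample_mean(2)[OF P_facts(1) _ n_pos, of "\<lambda>w. \<bar>tau (ps P) w\<bar>"] tau by simp
qed

lemma integrable_Wn_Ghat:
  assumes k: "k \<in> K"
  shows "integrable (Pn P n) (\<lambda>s. Wn (ps P) n s (Ghat n k s))"
    and "- (\<bar>M\<bar> / \<kappa>) \<le> (\<integral>s. Wn (ps P) n s (Ghat n k s) \<partial>Pn P n)"
proof -
  show int: "integrable (Pn P n) (\<lambda>s. Wn (ps P) n s (Ghat n k s))"
    using mean_abs_tau(1) measurable_Wn_Ghat[OF k]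
    by (rule Bochner_Integration.integrable_bound) (auto intro!: AE_I2 order_trans[OF abs_Wn_le])
  have "(\<integral>s. - (1 / real n * (\<Sum>i<n. \<bar>tau (ps P) (s i)\<bar>)) \<partial>Pn P n)
      \<le> (\<integral>s. Wn (ps P) n s (Ghat n k s) \<partial>Pn P n)"
  proof (rule integral_mono)
    fix s
    show "- (1 / real n * (\<Sum>i<n. \<bar>tau (ps P) (s i)\<bar>)) \<le> Wn (ps P) n s (Ghat n k s)"
      using abs_Wn_le[of "ps P" n s "Ghat n k s"] by linarith
  qed (use mean_abs_tau(1) int in auto)
  then show "- (\<bar>M\<bar> / \<kappa>) \<le> (\<integral>s. Wn (ps P) n s (Ghat n k s) \<partial>Pn P n)"
    using mean_abs_tau(2) by simp
qed

definition excess :: "nat \<Rightarrow> (nat \<Rightarrow> 'x obs) \<Rightarrow> real" where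
  "excess k s = Wn (ps P) n s (Ghat n k s) - Welfare (ps P) P (Ghat n k s) - Ctil k s
     - sqrt (real k / real n)"

definition excess_sum :: "(nat \<Rightarrow> 'x obs) \<Rightarrow> ennreal" where
  "excess_sum s = (\<Sum>k. if k \<in> K then ennreal (max (excess k s) 0) else 0)"

lemma measurable_excess: "k \<in> K \<Longrightarrow> excess k \<in> borel_measurable (Pn P n)"
  unfolding excess_def[abs_def]
  using measurable_Wn_Ghat measurable_Welfare_Ghat Ctil_meas[THEN conjunct1, THEN measurable_sample]
  by (intro borel_measurable_diff) auto

lemma measurable_excess_term:
  "(\<lambda>s. if k \<in> K then ennreal (max (excess k s) 0) else 0) \<in> borel_measurable (Pn P n)"
  using measurable_excess by (cases "k \<in> K") auto

lemma measurable_excess_sum: "excess_sum \<in> borel_measurable (Pn P n)"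
  unfolding excess_sum_def[abs_def] by (rule borel_measurable_suminf_order measurable_excess_term)+

lemma excess_le_excess_sum:
  assumes k: "k \<in> K" and fin: "excess_sum s < \<top>"
  shows "excess k s \<le> enn2real (excess_sum s)"
proof -
  let ?f = "\<lambda>j. if j \<in> K then ennreal (max (excess j s) 0) else 0"
  have "(\<Sum>j\<in>{k}. ?f j) \<le> (\<Sum>j. ?f j)"
    by (rule sum_le_suminf[OF summableI]) auto
  then have "ennreal (max (excess k s) 0) \<le> excess_sum s"
    using k by (simp add: excess_sum_def)
  then have "enn2real (ennreal (max (excess k s) 0)) \<le> enn2real (excess_sum s)"
    by (rule enn2real_mono) (use fin in simp)
  moreover have "enn2real (ennreal (max (excess k s) 0)) = max (excess k s) 0"
    by (rule enn2real_ennreal) simp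
  ultimately show ?thesis by linarith
qed

text \<open>Shifting the threshold by \<open>sqrt (k / n)\<close> multiplies the Gaussian tail of
  condition (i) by \<open>exp (- 2 * c0) ^ k\<close>, which makes the excesses summable over \<open>k\<close>.\<close>
lemma nn_integral_excess_le:
  assumes k: "k \<in> K"
  shows "(\<integral>\<^sup>+s. ennreal (max (excess k s) 0) \<partial>Pn P n)
    \<le> ennreal (c1 * exp (- 2 * c0) ^ k / ((1 - exp (- 1)) * sqrt (2 * c0 * real n)))"
proof (rule nn_integral_pos_part_le_gaussian_tail[OF _ measurable_excess[OF k]])
  show "finite_measure (Pn P n)" by unfold_locales
  show "0 \<le> c1 * exp (- 2 * c0) ^ k" using c1_nonneg by simp
  show "0 < 2 * c0 * real n" using c0_pos n_pos by simp
  fix t :: real assume t: "0 \<le> t"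
  define u where "u = sqrt (real k / real n)"
  have u: "0 < u" "2 * c0 * real n * u\<^sup>2 = 2 * c0 * real k"
    using K_pos[OF k] n_pos by (auto simp: u_def)
  have "{s \<in> space (Pn P n). t < excess k s} = {s \<in> space (Pn P n).
      Wn (ps P) n s (Ghat n k s) - Welfare (ps P) P (Ghat n k s) - Ctil k s > t + u}"
    unfolding excess_def u_def by auto
  then have "measure (Pn P n) {s \<in> space (Pn P n). t < excess k s}
      \<le> c1 * exp (- 2 * c0 * real n * (t + u)\<^sup>2)"
    using excess_tail[OF k, of "t + u"] t u by simp
  also have "\<dots> \<le> c1 * (exp (- (2 * c0 * real n) * u\<^sup>2) * exp (- (2 * c0 * real n) * t\<^sup>2))"
    using exp_neg_square_add_le[of "2 * c0 * real n" t u] c0_pos c1_nonneg t u(1)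
    by (simp add: mult_left_mono)
  also have "exp (- (2 * c0 * real n) * u\<^sup>2) = exp (- 2 * c0) ^ k"
    using u by (simp add: exp_of_nat_mult[symmetric] mult.commute)
  finally show "measure (Pn P n) {s \<in> space (Pn P n). t < excess k s}
      \<le> c1 * exp (- 2 * c0) ^ k * exp (- (2 * c0 * real n) * t\<^sup>2)"
    by (simp add: mult.assoc)
qed

lemma nn_integral_excess_sum_le:
  "(\<integral>\<^sup>+s. excess_sum s \<partial>Pn P n) \<le> ennreal (excess_constant c0 c1 / sqrt (real n))"
proof -
  define a where "a = c1 / ((1 - exp (- 1)) * sqrt (2 * c0 * real n))"
  have a: "0 \<le> a" using c0_pos c1_nonneg by (simp add: a_def)
  have "(\<integral>\<^sup>+s. excess_sum s \<partial>Pn P n)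
      = (\<Sum>k. \<integral>\<^sup>+s. (if k \<in> K then ennreal (max (excess k s) 0) else 0) \<partial>Pn P n)"
    unfolding excess_sum_def by (rule nn_integral_suminf measurable_excess_term)+
  also have "\<dots> \<le> (\<Sum>k. ennreal (a * exp (- 2 * c0) ^ k))"
  proof (intro suminf_le summableI)
    fix k
    show "(\<integral>\<^sup>+s. (if k \<in> K then ennreal (max (excess k s) 0) else 0) \<partial>Pn P n)
        \<le> ennreal (a * exp (- 2 * c0) ^ k)"
      using nn_integral_excess_le[of k] by (cases "k \<in> K") (simp_all add: a_def mult_ac)
  qed
  also have "\<dots> = ennreal (a * (1 / (1 - exp (- 2 * c0))))"
  proof (rule suminf_ennreal_eq)
    have "(\<lambda>k. exp (- 2 * c0) ^ k) sums (1 / (1 - exp (- 2 * c0)))"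
      using c0_pos by (intro geometric_sums) simp
    then show "(\<lambda>k. a * exp (- 2 * c0) ^ k) sums (a * (1 / (1 - exp (- 2 * c0))))"
      by (rule sums_mult)
  qed (use a in auto)
  also have "a * (1 / (1 - exp (- 2 * c0))) = excess_constant c0 c1 / sqrt (real n)"
    by (simp add: a_def excess_constant_def real_sqrt_mult)
  finally show ?thesis .
qed

lemma integral_Ctil_ge:
  assumes k: "k \<in> K"
  shows "- 2 * (\<bar>M\<bar> / \<kappa>) - excess_constant c0 c1 / sqrt (real n)
    \<le> (\<integral>s. Ctil k s \<partial>Pn P n) + sqrt (real k / real n)"
proof -
  note Wn = integrable_Wn_Ghat[OF k] and W = integrable_Welfare_Ghat[OF k]
  have "(\<integral>s. - Ctil k s \<partial>Pn P n) \<le> (\<integral>s. - Wn (ps P) n s (Ghat n k s)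
      + Welfare (ps P) P (Ghat n k s) + sqrt (real k / real n) \<partial>Pn P n)
      + excess_constant c0 c1 / sqrt (real n)"
  proof (rule integral_le_integral_add_nn_integral
      [OF _ _ measurable_excess_sum _ nn_integral_excess_sum_le])
    show "integrable (Pn P n) (\<lambda>s. - Ctil k s)" using Ctil_meas[OF k] by simp
    show "integrable (Pn P n) (\<lambda>s. - Wn (ps P) n s (Ghat n k s)
        + Welfare (ps P) P (Ghat n k s) + sqrt (real k / real n))"
      using Wn(1) W(1) by simp
    show "0 \<le> excess_constant c0 c1 / sqrt (real n)"
      using c0_pos c1_nonneg by (simp add: excess_constant_def)
    fix s assume "excess_sum s < \<top>"
    then show "- Ctil k s \<le> - Wn (ps P) n s (Ghat n k s) + Welfare (ps P) P (Ghat n k s)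
        + sqrt (real k / real n) + enn2real (excess_sum s)"
      using excess_le_excess_sum[OF k] unfolding excess_def by fastforce
  qed
  then show ?thesis
    using Wn W Ctil_meas[OF k] by (simp add: sample.prob_space)
qed

definition score_error :: "(nat \<Rightarrow> 'x obs) \<Rightarrow> real" where
  "score_error s = 1 / real n * (\<Sum>i<n. \<bar>tauhat ehat eps n s i - tau (ps P) (s i)\<bar>)"

definition penalty_error :: "(nat \<Rightarrow> 'x obs) \<Rightarrow> ennreal" where
  "penalty_error s = (SUP k\<in>K. ennreal \<bar>Cpen n k s - Ctil k s\<bar>)"

lemma measurable_score_error: "score_error \<in> borel_measurable (Pn P n)"
  unfolding score_error_def[abs_def]
  using measurable_tauhat_error[of "ps P" ehat n eps, OF P_facts(3) ehat_meas]
  by (rule measurable_sample)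

lemma measurable_penalty_error: "penalty_error \<in> borel_measurable (Pn P n)"
  unfolding penalty_error_def[abs_def]
proof (rule borel_measurable_SUP[OF countableI_type])
  fix k assume k: "k \<in> K"
  have "Cpen n k \<in> borel_measurable (Pn P n)" "Ctil k \<in> borel_measurable (Pn P n)"
    using Cpen_meas[OF k] Ctil_meas[OF k] by (auto intro: measurable_sample)
  then show "(\<lambda>s. ennreal \<bar>Cpen n k s - Ctil k s\<bar>) \<in> borel_measurable (Pn P n)"
    by measurable
qed

lemma abs_Cpen_minus_Ctil_le:
  assumes "k \<in> K" "penalty_error s < \<top>"
  shows "\<bar>Cpen n k s - Ctil k s\<bar> \<le> enn2real (penalty_error s)"
proof -
  have "ennreal \<bar>Cpen n k s - Ctil k s\<bar> \<le> penalty_error s"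
    unfolding penalty_error_def using assms(1) by (rule SUP_upper)
  from enn2real_mono[OF this assms(2)] show ?thesis by simp
qed

lemma measurable_regret:
  "(\<lambda>s. Wstar (ps P) P \<G> - Welfare (ps P) P (Ghat n (khat n s) s)) \<in> borel_measurable (Pn P n)"
proof -
  have "(\<lambda>s. Welfare (ps P) P (Ghat n (khat n s) s)) \<in> borel_measurable (Pn P n)"
    by (rule measurable_compose_countable_on[OF measurable_Welfare_Ghat countableI_type
          measurable_sample[OF khat_meas] khat_in_K])
  then show ?thesis by simp
qed

lemma integrable_regret:
  "integrable (Pn P n) (\<lambda>s. Wstar (ps P) P \<G> - Welfare (ps P) P (Ghat n (khat n s) s))"
proof (rule sample.integrable_const_bound[OF AE_I2 measurable_regret])
  fix s assume "s \<in> space (Pn P n)"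
  then have "\<bar>Welfare (ps P) P (Ghat n (khat n s) s)\<bar> \<le> \<bar>M\<bar> / \<kappa>"
    by (intro abs_Welfare_Ghat_le khat_in_K)
  then show "norm (Wstar (ps P) P \<G> - Welfare (ps P) P (Ghat n (khat n s) s))
      \<le> \<bar>Wstar (ps P) P \<G>\<bar> + \<bar>M\<bar> / \<kappa>"
    by simp
qed

lemma integrable_Wn:
  assumes "G \<in> sets borel"
  shows "integrable (Pn P n) (\<lambda>s. Wn (ps P) n s G)"
    and "(\<integral>s. Wn (ps P) n s G \<partial>Pn P n) = Welfare (ps P) P G"
  using integral_sample_mean[OF P_facts(1) integrable_tau_indicator(1)[OF P_in_PMk kappa_pos assms]
      n_pos]
  by (simp_all add: Wn_def Welfare_def)

lemma regret_le_pointwise: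
  assumes k: "k \<in> K" and G: "G \<in> Gs k" and s: "s \<in> space (Pn P n)"
    and fin: "penalty_error s < \<top>" "excess_sum s < \<top>"
  shows "Wstar (ps P) P \<G> - Welfare (ps P) P (Ghat n (khat n s) s)
    \<le> Wstar (ps P) P \<G> - Wn (ps P) n s G + Ctil k s + sqrt (real k / real n)
      + 2 * score_error s + 2 * enn2real (penalty_error s) + enn2real (excess_sum s)"
proof -
  have s': "s \<in> space (SampleM n)" using s space_sample by simp
  define kh where "kh = khat n s"
  have kh: "kh \<in> K" using khat_in_K[OF s] by (simp add: kh_def)
  have "Wn (ps P) n s G - Ctil k s - sqrt (real k / real n) - 2 * score_error s
      - 2 * enn2real (penalty_error s) - enn2real (excess_sum s) \<le> Welfare (ps P) P (Ghat n kh s)"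
  proof (rule welfare_of_penalized_selection_ge[where We="Wen ehat eps n s" and Wn="Wn (ps P) n s"
        and W="Welfare (ps P) P" and C="\<lambda>j. Cpen n j s" and Ct="\<lambda>j. Ctil j s"
        and r="\<lambda>j. sqrt (real j / real n)" and Gh="\<lambda>j. Ghat n j s"])
    show "Wen ehat eps n s G \<le> Wen ehat eps n s (Ghat n k s)"
      using Ghat_max[OF k s'] G by blast
    show "Wen ehat eps n s (Ghat n k s) - Cpen n k s - sqrt (real k / real n)
        \<le> Wen ehat eps n s (Ghat n kh s) - Cpen n kh s - sqrt (real kh / real n)"
      using khat_max[OF s'] k unfolding kh_def Ren_def by blast
    show "\<bar>Wen ehat eps n s G - Wn (ps P) n s G\<bar> \<le> score_error s"
      "\<bar>Wen ehat eps n s (Ghat n kh s) - Wn (ps P) n s (Ghat n kh s)\<bar> \<le> score_error s"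
      unfolding score_error_def by (rule abs_Wen_minus_Wn_le)+
    show "\<bar>Cpen n k s - Ctil k s\<bar> \<le> enn2real (penalty_error s)"
      "\<bar>Cpen n kh s - Ctil kh s\<bar> \<le> enn2real (penalty_error s)"
      using abs_Cpen_minus_Ctil_le fin k kh by blast+
    show "Wn (ps P) n s (Ghat n kh s) - Welfare (ps P) P (Ghat n kh s) - Ctil kh s
        - sqrt (real kh / real n) \<le> enn2real (excess_sum s)"
      using excess_le_excess_sum[OF kh fin(2)] unfolding excess_def .
  qed
  then show ?thesis unfolding kh_def by linarith
qed

lemma expected_regret_le:
  assumes k: "k \<in> K"
    and d: "0 \<le> d" "(\<integral>\<^sup>+s. ennreal (score_error s) \<partial>Pn P n) \<le> ennreal d"
    and \<sigma>: "0 \<le> \<sigma>" "(\<integral>\<^sup>+s. penalty_error s \<partial>Pn P n) \<le> ennreal \<sigma>"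
  shows "(\<integral>s. Wstar (ps P) P \<G> - Welfare (ps P) P (Ghat n (khat n s) s) \<partial>Pn P n)
    \<le> (\<integral>s. Ctil k s \<partial>Pn P n) + (Wstar (ps P) P \<G> - Wstar (ps P) P (Gs k))
      + sqrt (real k / real n) + 2 * d + 2 * \<sigma> + excess_constant c0 c1 / sqrt (real n)"
proof -
  define R where "R s = 2 * ennreal (score_error s) + 2 * penalty_error s + excess_sum s" for s
  define c where "c = 2 * d + 2 * \<sigma> + excess_constant c0 c1 / sqrt (real n)"
  have R_meas: "R \<in> borel_measurable (Pn P n)"
    unfolding R_def[abs_def]
    using measurable_score_error measurable_penalty_error measurable_excess_sum by measurable
  have c: "0 \<le> c"
    using d \<sigma> c0_pos c1_nonneg by (simp add: c_def excess_constant_def)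
  have "(\<integral>\<^sup>+s. R s \<partial>Pn P n) = 2 * (\<integral>\<^sup>+s. ennreal (score_error s) \<partial>Pn P n)
      + 2 * (\<integral>\<^sup>+s. penalty_error s \<partial>Pn P n) + (\<integral>\<^sup>+s. excess_sum s \<partial>Pn P n)"
    unfolding R_def using measurable_score_error measurable_penalty_error measurable_excess_sum
    by (simp add: nn_integral_add nn_integral_cmult)
  also have "\<dots> \<le> 2 * ennreal d + 2 * ennreal \<sigma> + ennreal (excess_constant c0 c1 / sqrt (real n))"
    using d \<sigma> nn_integral_excess_sum_le by (intro add_mono mult_left_mono) auto
  also have "\<dots> = ennreal c"
    using d \<sigma> c c0_pos c1_nonneg
    by (simp add: c_def excess_constant_def ennreal_plus ennreal_mult del: ennreal_plus_if)
  finally have R_int: "(\<integral>\<^sup>+s. R s \<partial>Pn P n) \<le> ennreal c" .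
  have "(\<integral>s. Wstar (ps P) P \<G> - Welfare (ps P) P (Ghat n (khat n s) s) \<partial>Pn P n)
      \<le> Wstar (ps P) P \<G> - Welfare (ps P) P G + (\<integral>s. Ctil k s \<partial>Pn P n)
        + sqrt (real k / real n) + c" if G: "G \<in> Gs k" for G
  proof -
    have G_borel: "G \<in> sets borel" using G Gs_sub[OF k] G_meas by blast
    note Wn = integrable_Wn[OF G_borel] and Ctil = Ctil_meas[OF k]
    have "(\<integral>s. Wstar (ps P) P \<G> - Welfare (ps P) P (Ghat n (khat n s) s) \<partial>Pn P n)
        \<le> (\<integral>s. Wstar (ps P) P \<G> - Wn (ps P) n s G + Ctil k s + sqrt (real k / real n) \<partial>Pn P n) + c"
    proof (rule integral_le_integral_add_nn_integral[OF integrable_regret _ R_meas c R_int])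
      show "integrable (Pn P n)
          (\<lambda>s. Wstar (ps P) P \<G> - Wn (ps P) n s G + Ctil k s + sqrt (real k / real n))"
        using Wn(1) Ctil by simp
      fix s assume s: "s \<in> space (Pn P n)" and "R s < \<top>"
      then have fin: "penalty_error s < \<top>" "excess_sum s < \<top>"
        by (auto simp: R_def ennreal_mult_less_top)
      have "enn2real (R s)
          = 2 * score_error s + 2 * enn2real (penalty_error s) + enn2real (excess_sum s)"
        using fin by (simp add: R_def enn2real_plus enn2real_mult ennreal_mult_less_top
            score_error_def)
      then show "Wstar (ps P) P \<G> - Welfare (ps P) P (Ghat n (khat n s) s)
          \<le> Wstar (ps P) P \<G> - Wn (ps P) n s G + Ctil k s + sqrt (real k / real n) + enn2real (R s)"
        using regret_le_pointwise[OF k G s fin] by linarith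
    qed
    then show ?thesis using Wn Ctil by (simp add: sample.prob_space)
  qed
  then have "Wstar (ps P) P (Gs k) \<le> Wstar (ps P) P \<G> + (\<integral>s. Ctil k s \<partial>Pn P n)
      + sqrt (real k / real n) + c
      - (\<integral>s. Wstar (ps P) P \<G> - Welfare (ps P) P (Ghat n (khat n s) s) \<partial>Pn P n)"
    unfolding Wstar_def[of _ _ "Gs k"] by (intro cSUP_least Gs_nonempty[OF k]) fastforce
  then show ?thesis by (simp add: c_def)
qed

lemma expected_regret_le_crude:
  assumes k: "k \<in> K"
  shows "(\<integral>s. Wstar (ps P) P \<G> - Welfare (ps P) P (Ghat n (khat n s) s) \<partial>Pn P n)
    \<le> (\<integral>s. Ctil k s \<partial>Pn P n) + (Wstar (ps P) P \<G> - Wstar (ps P) P (Gs k))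
      + sqrt (real k / real n) + 4 * (\<bar>M\<bar> / \<kappa>) + excess_constant c0 c1 / sqrt (real n)"
proof -
  have "(\<integral>s. Wstar (ps P) P \<G> - Welfare (ps P) P (Ghat n (khat n s) s) \<partial>Pn P n)
      \<le> (\<integral>s. Wstar (ps P) P \<G> + \<bar>M\<bar> / \<kappa> \<partial>Pn P n)"
  proof (rule integral_mono[OF integrable_regret])
    fix s assume "s \<in> space (Pn P n)"
    then have "\<bar>Welfare (ps P) P (Ghat n (khat n s) s)\<bar> \<le> \<bar>M\<bar> / \<kappa>"
      by (intro abs_Welfare_Ghat_le khat_in_K)
    then show "Wstar (ps P) P \<G> - Welfare (ps P) P (Ghat n (khat n s) s)
        \<le> Wstar (ps P) P \<G> + \<bar>M\<bar> / \<kappa>" by linarith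
  qed simp
  moreover have "Wstar (ps P) P (Gs k) \<le> \<bar>M\<bar> / \<kappa>"
    using Wstar_le[OF P_in_PMk kappa_pos] Gs_sub[OF k] G_meas Gs_nonempty[OF k] by blast
  ultimately show ?thesis
    using integral_Ctil_ge[OF k] by (simp add: sample.prob_space)
qed

lemma expected_regret_le_rates:
  assumes k: "k \<in> K"
    and rates: "b \<Longrightarrow> 0 < \<phi> \<and> (\<integral>\<^sup>+s. ennreal (score_error s) \<partial>Pn P n) \<le> ennreal (ca / \<phi>)
      \<and> (\<integral>\<^sup>+s. penalty_error s \<partial>Pn P n) \<le> ennreal (cb / \<phi>)"
  shows "(\<integral>s. Wstar (ps P) P \<G> - Welfare (ps P) P (Ghat n (khat n s) s) \<partial>Pn P n)
    \<le> (\<integral>s. Ctil k s \<partial>Pn P n) + (Wstar (ps P) P \<G> - Wstar (ps P) P (Gs k))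
      + sqrt (real k / real n) + (if b then 2 * (\<bar>ca\<bar> + \<bar>cb\<bar>) / \<phi> else 4 * (\<bar>M\<bar> / \<kappa>))
      + excess_constant c0 c1 / sqrt (real n)"
proof (cases b)
  case True
  with rates have \<phi>: "0 < \<phi>" and score: "(\<integral>\<^sup>+s. ennreal (score_error s) \<partial>Pn P n) \<le> ennreal (ca / \<phi>)"
    and penalty: "(\<integral>\<^sup>+s. penalty_error s \<partial>Pn P n) \<le> ennreal (cb / \<phi>)"
    by auto
  have "ennreal (ca / \<phi>) \<le> ennreal (\<bar>ca\<bar> / \<phi>)" "ennreal (cb / \<phi>) \<le> ennreal (\<bar>cb\<bar> / \<phi>)"
    using \<phi> by (intro ennreal_leI divide_right_mono; simp)+
  with score penalty have "(\<integral>\<^sup>+s. ennreal (score_error s) \<partial>Pn P n) \<le> ennreal (\<bar>ca\<bar> / \<phi>)"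
    "(\<integral>\<^sup>+s. penalty_error s \<partial>Pn P n) \<le> ennreal (\<bar>cb\<bar> / \<phi>)"
    by (blast intro: order_trans)+
  from expected_regret_le[OF k _ this(1) _ this(2)] \<phi> True show ?thesis
    by (simp add: add_divide_distrib)
next
  case False
  with expected_regret_le_crude[OF k] show ?thesis by simp
qed

end

lemma eventual_rate_in_bigo:
  fixes \<phi> :: "nat \<Rightarrow> real"
  assumes "filterlim \<phi> at_top at_top"
  shows "(\<lambda>n. if N \<le> n \<and> 0 < \<phi> n then a / \<phi> n else b) \<in> O(\<lambda>n. 1 / \<phi> n)"
proof (rule bigoI[where c="\<bar>a\<bar>"])
  have "eventually (\<lambda>n. N \<le> n \<and> 0 < \<phi> n) at_top"
    using assms eventually_ge_at_top[of N] unfolding filterlim_at_top_dense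
    by (auto intro: eventually_conj)
  then show "\<forall>\<^sub>F n in at_top. norm (if N \<le> n \<and> 0 < \<phi> n then a / \<phi> n else b) \<le> \<bar>a\<bar> * norm (1 / \<phi> n)"
    by eventually_elim (simp add: abs_divide)
qed

theorem theorem3p2:
  fixes ps :: "('x::euclidean_space) obs measure \<Rightarrow> 'x \<Rightarrow> real"
    and M \<kappa> :: real
    and \<G> :: "'x set set"
    and K :: "nat set"
    and Gs :: "nat \<Rightarrow> 'x set set"
    and ehat :: "nat \<Rightarrow> (nat \<Rightarrow> 'x obs) \<Rightarrow> 'x \<Rightarrow> real"
    and eps :: "nat \<Rightarrow> real"
    and \<phi> :: "nat \<Rightarrow> real"
    and Pe :: "'x obs measure set"
    and Cpen :: "nat \<Rightarrow> nat \<Rightarrow> (nat \<Rightarrow> 'x obs) \<Rightarrow> real"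
    and Ctil :: "'x obs measure \<Rightarrow> nat \<Rightarrow> nat \<Rightarrow> (nat \<Rightarrow> 'x obs) \<Rightarrow> real"
    and Ghat :: "nat \<Rightarrow> nat \<Rightarrow> (nat \<Rightarrow> 'x obs) \<Rightarrow> 'x set"
    and khat :: "nat \<Rightarrow> (nat \<Rightarrow> 'x obs) \<Rightarrow> nat"
  assumes kappa: "0 < \<kappa>" "\<kappa> < 1 / 2"
    and G_meas: "\<G> \<subseteq> sets borel"
    and K_index: "K = {k. 1 \<le> k} \<or> (\<exists>m\<ge>1. K = {1..m})"
    and Gs_sub: "\<And>k. k \<in> K \<Longrightarrow> Gs k \<subseteq> \<G>"
    and Gs_VC: "\<And>k. k \<in> K \<Longrightarrow> finite_VC (Gs k)"
    and trimming: "\<exists>\<alpha>>0. eps \<in> O(\<lambda>n. real n powr (- \<alpha>))"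
    and phi_lim: "filterlim \<phi> at_top at_top"
    and Pe_rate: "\<exists>c N. \<forall>n\<ge>N. \<forall>P\<in>Pe.
         (\<integral>\<^sup>+ s. ennreal ((1 / real n) * (\<Sum>i<n. \<bar>tauhat ehat eps n s i - tau (ps P) (s i)\<bar>)) \<partial>Pn P n)
           \<le> ennreal (c / \<phi> n)"
    and ehat_meas: "\<And>n. (\<lambda>(s, x). ehat n s x) \<in> borel_measurable (SampleM n \<Otimes>\<^sub>M borel)"
    and Ghat_meas: "\<And>n k. k \<in> K \<Longrightarrow>
         (\<lambda>(s, x). indicator (Ghat n k s) x :: real) \<in> borel_measurable (SampleM n \<Otimes>\<^sub>M borel)"
    and Ghat_max: "\<And>n k s. k \<in> K \<Longrightarrow> s \<in> space (SampleM n) \<Longrightarrow>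
         Ghat n k s \<in> Gs k \<and> (\<forall>G\<in>Gs k. Wen ehat eps n s G \<le> Wen ehat eps n s (Ghat n k s))"
    and khat_meas: "\<And>n. khat n \<in> measurable (SampleM n) (count_space UNIV)"
    and khat_max: "\<And>n s. s \<in> space (SampleM n) \<Longrightarrow> khat n s \<in> K \<and>
         (\<forall>k\<in>K. Ren ehat eps Cpen n k s (Ghat n k s)
                 \<le> Ren ehat eps Cpen n (khat n s) s (Ghat n (khat n s) s))"
    and Cpen_meas: "\<And>n k. k \<in> K \<Longrightarrow> Cpen n k \<in> borel_measurable (SampleM n)"
    and Ctil_meas: "\<And>P n k. P \<in> Pe \<inter> PMk ps M \<kappa> \<Longrightarrow> k \<in> K \<Longrightarrow>
         Ctil P n k \<in> borel_measurable (SampleM n) \<and> integrable (Pn P n) (Ctil P n k)"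
    and cond_i: "\<exists>c0>0. \<exists>c1>0. \<forall>n\<ge>1. \<forall>k\<in>K. \<forall>\<epsilon>>0. \<forall>P\<in>Pe \<inter> PMk ps M \<kappa>.
         measure (Pn P n) {s \<in> space (Pn P n).
            Wn (ps P) n s (Ghat n k s) - Welfare (ps P) P (Ghat n k s) - Ctil P n k s > \<epsilon>}
           \<le> c1 * exp (- 2 * c0 * real n * \<epsilon>\<^sup>2)"
    and cond_ii: "\<exists>C1>0. \<forall>n\<ge>1. \<forall>k\<in>K. \<forall>P\<in>Pe \<inter> PMk ps M \<kappa>.
         (\<integral>s. Ctil P n k s \<partial>Pn P n) \<le> C1 * sqrt (real (VC_dim (Gs k)) / real n)"
    and cond_iii: "\<exists>c N. \<forall>n\<ge>N. \<forall>P\<in>Pe \<inter> PMk ps M \<kappa>.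
         (\<integral>\<^sup>+ s. (SUP k\<in>K. ennreal \<bar>Cpen n k s - Ctil P n k s\<bar>) \<partial>Pn P n) \<le> ennreal (c / \<phi> n)"
  shows "\<exists>\<Delta>>0. \<exists>c0>0. \<exists>r :: nat \<Rightarrow> real. r \<in> O(\<lambda>n. 1 / \<phi> n) \<and>
     (\<forall>P\<in>Pe \<inter> PMk ps M \<kappa>. \<forall>n\<ge>1. \<forall>k\<in>K.
        (\<integral>s. (Wstar (ps P) P \<G> - Welfare (ps P) P (Ghat n (khat n s) s)) \<partial>Pn P n)
          \<le> (\<integral>s. Ctil P n k s \<partial>Pn P n) + (Wstar (ps P) P \<G> - Wstar (ps P) P (Gs k))
             + sqrt (real k / real n) + r n + sqrt (ln (\<Delta> * exp 1) / (2 * c0 * real n)))"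
proof -
  \<comment> \<open>Any \<open>\<Delta> > 0\<close> works; we take \<open>\<Delta> = 1\<close>.\<close>
  obtain c0 c1 where c0: "0 < c0" and c1: "0 < c1"
    and tail: "\<forall>n\<ge>1. \<forall>k\<in>K. \<forall>\<epsilon>>0. \<forall>P\<in>Pe \<inter> PMk ps M \<kappa>.
         measure (Pn P n) {s \<in> space (Pn P n).
            Wn (ps P) n s (Ghat n k s) - Welfare (ps P) P (Ghat n k s) - Ctil P n k s > \<epsilon>}
           \<le> c1 * exp (- 2 * c0 * real n * \<epsilon>\<^sup>2)"
    using cond_i by blast
  obtain ca Na where score_rate: "\<forall>n\<ge>Na. \<forall>P\<in>Pe.
         (\<integral>\<^sup>+ s. ennreal ((1 / real n) * (\<Sum>i<n. \<bar>tauhat ehat eps n s i - tau (ps P) (s i)\<bar>)) \<partial>Pn P n)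
           \<le> ennreal (ca / \<phi> n)"
    using Pe_rate by blast
  obtain cb Nb where penalty_rate: "\<forall>n\<ge>Nb. \<forall>P\<in>Pe \<inter> PMk ps M \<kappa>.
         (\<integral>\<^sup>+ s. (SUP k\<in>K. ennreal \<bar>Cpen n k s - Ctil P n k s\<bar>) \<partial>Pn P n) \<le> ennreal (cb / \<phi> n)"
    using cond_iii by blast
  define A where "A = excess_constant c0 c1"
  define c0' where "c0' = 1 / (2 * A\<^sup>2)"
  define r where "r n = (if max Na Nb \<le> n \<and> 0 < \<phi> n then 2 * (\<bar>ca\<bar> + \<bar>cb\<bar>) / \<phi> n
    else 4 * (\<bar>M\<bar> / \<kappa>))" for n
  have "0 < A" using c0 c1 by (simp add: A_def excess_constant_def)
  then have "0 < c0'" by (simp add: c0'_def)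
  have sqrt_eq: "sqrt (ln (1 * exp 1) / (2 * c0' * real n)) = A / sqrt (real n)" for n
    using \<open>0 < A\<close> by (simp add: c0'_def real_sqrt_divide)
  have regret: "(\<integral>s. (Wstar (ps P) P \<G> - Welfare (ps P) P (Ghat n (khat n s) s)) \<partial>Pn P n)
      \<le> (\<integral>s. Ctil P n k s \<partial>Pn P n) + (Wstar (ps P) P \<G> - Wstar (ps P) P (Gs k))
        + sqrt (real k / real n) + r n + sqrt (ln (1 * exp 1) / (2 * c0' * real n))"
    if P: "P \<in> Pe \<inter> PMk ps M \<kappa>" and n: "1 \<le> n" and k: "k \<in> K" for P n k
  proof -
    interpret pwm_sample ps M \<kappa> \<G> K Gs ehat eps Cpen Ghat khat P n "Ctil P n" c0 c1
      using kappa P n G_meas K_index Gs_sub ehat_meas Ghat_meas Ghat_max khat_meas khat_max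
        Cpen_meas Ctil_meas c0 c1 tail
      by unfold_locales auto
    show ?thesis
      unfolding sqrt_eq r_def A_def
    proof (rule expected_regret_le_rates[OF k])
      assume "max Na Nb \<le> n \<and> 0 < \<phi> n"
      then show "0 < \<phi> n \<and> (\<integral>\<^sup>+s. ennreal (score_error s) \<partial>Pn P n) \<le> ennreal (ca / \<phi> n)
          \<and> (\<integral>\<^sup>+s. penalty_error s \<partial>Pn P n) \<le> ennreal (cb / \<phi> n)"
        using score_rate penalty_rate P unfolding score_error_def penalty_error_def by simp
    qed
  qed
  have "r \<in> O(\<lambda>n. 1 / \<phi> n)"
    unfolding r_def[abs_def] using phi_lim by (rule eventual_rate_in_bigo)
  then show ?thesis
    using \<open>0 < c0'\<close> regret
    by (rule_tac exI[of _ 1], intro conjI exI[of _ c0'] exI[of _ r] ballI allI impI) auto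
qed

end
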